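(* Let $d,N\in\mathbb{N}$ and, for each $k=0,\dots,N-1$, let $\mathcal{L}^k_d:(\mathbb{R}^d)^{k+2}\times(\mathbb{R}^d)^{N+1-k}\to\mathbb{R}$, $(x_0,\dots,x_{k+1};y_k,\dots,y_N)\mapsto\mathcal{L}^k_d(x_{(0,k+1)},y_{(k,N)})$, be differentiable. Fix $x_a,x_b,y_a,y_b\in\mathbb{R}^d$ and consider discrete curves $\{x_k\}_{k=0}^N,\{y_k\}_{k=0}^N\subset\mathbb{R}^d$ with $x_0=x_a$, $x_N=x_b$, $y_0=y_a$, $y_N=y_b$, and the discrete action $$S_d=\sum_{k=0}^{N-1}\mathcal{L}^k_d(x_{(0,k+1)},y_{(k,N)}).$$ Consider restricted variations: for $\{\eta_k\}_{k=0}^N\subset\mathbb{R}^d$ with $\eta_0=\eta_N=0$ and $\epsilon\in\mathbb{R}$, the varied curves are $x_k+\epsilon\eta_k$, $y_k+\epsilon\eta_k$ (the same variation for both). Then a pair of discrete curves satisfies $\frac{d}{d\epsilon}S_d\big|_{\epsilon=0}=0$ for all such $\{\eta_k\}$ if and only if $$\sum_{i=k-1}^{N-1}D_{x_k}\mathcal{L}^i_d(x_{(0,i+1)},y_{(i,N)})+\sum_{i=0}^{k}D_{y_k}\mathcal{L}^i_d(x_{(0,i+1)},y_{(i,N)})=0\qquad\text{for }k=1,\dots,N-1,$$ where $D_{x_k}=\partial/\partial x_k$ and $D_{y_k}=\partial/\partial y_k$.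
   Context: Notation: $x_{(0,k+1)}:=(x_0,\dots,x_{k+1})\in(\mathbb{R}^d)^{k+2}$ and $y_{(k,N)}:=(y_k,\dots,y_N)\in(\mathbb{R}^d)^{N+1-k}$. *)

theory Defs
  imports "HOL-Analysis.Analysis"
begin

text \<open>This is how a
  function on (R^d)^I x (R^d)^J is represented.\<close>
definition depends_only ::
  "nat set \<Rightarrow> nat set \<Rightarrow> ((nat \<Rightarrow> 'a) \<Rightarrow> (nat \<Rightarrow> 'a) \<Rightarrow> 'b) \<Rightarrow> bool" where
  "depends_only I J F \<longleftrightarrow>
     (\<forall>x x' y y'. (\<forall>i\<in>I. x i = x' i) \<longrightarrow> (\<forall>j\<in>J. y j = y' j) \<longrightarrow> F x y = F x' y')"

text \<open>Frechet differentiability (everywhere) of F as a function of the finitely many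
  vector variables x_i (i in I) and y_j (j in J), using the (equivalent) l1 product norm.\<close>
definition diff_in_coords ::
  "nat set \<Rightarrow> nat set \<Rightarrow> ((nat \<Rightarrow> 'a::real_normed_vector) \<Rightarrow> (nat \<Rightarrow> 'a) \<Rightarrow> real) \<Rightarrow> bool" where
  "diff_in_coords I J F \<longleftrightarrow>
     (\<forall>x y. \<exists>Dx Dy. (\<forall>i\<in>I. bounded_linear (Dx i)) \<and> (\<forall>j\<in>J. bounded_linear (Dy j)) \<and>
        (\<forall>e>0. \<exists>\<delta>>0. \<forall>h g.
           (\<forall>i. i \<notin> I \<longrightarrow> h i = 0) \<longrightarrow> (\<forall>j. j \<notin> J \<longrightarrow> g j = 0) \<longrightarrow>
           (\<Sum>i\<in>I. norm (h i)) + (\<Sum>j\<in>J. norm (g j)) < \<delta> \<longrightarrow>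
           \<bar>F (\<lambda>i. x i + h i) (\<lambda>j. y j + g j) - F x y
              - (\<Sum>i\<in>I. Dx i (h i)) - (\<Sum>j\<in>J. Dy j (g j))\<bar>
             \<le> e * ((\<Sum>i\<in>I. norm (h i)) + (\<Sum>j\<in>J. norm (g j)))))"

definition discrete_action ::
  "nat \<Rightarrow> (nat \<Rightarrow> (nat \<Rightarrow> 'a) \<Rightarrow> (nat \<Rightarrow> 'a) \<Rightarrow> real) \<Rightarrow> (nat \<Rightarrow> 'a) \<Rightarrow> (nat \<Rightarrow> 'a) \<Rightarrow> real" where
  "discrete_action N L x y = (\<Sum>k<N. L k x y)"

end

theory Submission
  imports Defs
begin

text \<open>The first variation of the action along the common variation \<open>\<eta>\<close> is the sum over \<open>i\<close> of the
  derivatives of \<open>L\<^sub>i\<close>, and each of these is the sum of the partial derivatives of \<open>L\<^sub>i\<close> in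
  the coordinates \<open>x\<^sub>j, y\<^sub>j\<close> it depends on, applied to \<open>\<eta>\<^sub>j\<close>. Collecting the terms by \<open>j\<close>
  and dropping the endpoints, where \<open>\<eta>\<close> vanishes, writes the first variation as
  \<open>\<Sum>k=1..N-1. EL\<^sub>k (\<eta>\<^sub>k)\<close> with \<open>EL\<^sub>k\<close> the discrete Euler-Lagrange expression. As the
  \<open>\<eta>\<^sub>k\<close> can be chosen independently (test with \<open>\<eta>\<close> supported at one \<open>k\<close>), this vanishes for
  all \<open>\<eta>\<close> iff every \<open>EL\<^sub>k\<close> vanishes.\<close>

definition has_coord_derivatives ::
  "nat set \<Rightarrow> nat set \<Rightarrow> ((nat \<Rightarrow> 'a::real_normed_vector) \<Rightarrow> (nat \<Rightarrow> 'a) \<Rightarrow> real) \<Rightarrow>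
   (nat \<Rightarrow> 'a) \<Rightarrow> (nat \<Rightarrow> 'a) \<Rightarrow> (nat \<Rightarrow> 'a \<Rightarrow> real) \<Rightarrow> (nat \<Rightarrow> 'a \<Rightarrow> real) \<Rightarrow> bool" where
  "has_coord_derivatives I J F x y Dx Dy \<longleftrightarrow>
     (\<forall>i\<in>I. bounded_linear (Dx i)) \<and> (\<forall>j\<in>J. bounded_linear (Dy j)) \<and>
     (\<forall>e>0. \<exists>\<delta>>0. \<forall>h g.
        (\<forall>i. i \<notin> I \<longrightarrow> h i = 0) \<longrightarrow> (\<forall>j. j \<notin> J \<longrightarrow> g j = 0) \<longrightarrow>
        (\<Sum>i\<in>I. norm (h i)) + (\<Sum>j\<in>J. norm (g j)) < \<delta> \<longrightarrow>
        \<bar>F (\<lambda>i. x i + h i) (\<lambda>j. y j + g j) - F x y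
           - (\<Sum>i\<in>I. Dx i (h i)) - (\<Sum>j\<in>J. Dy j (g j))\<bar>
          \<le> e * ((\<Sum>i\<in>I. norm (h i)) + (\<Sum>j\<in>J. norm (g j))))"

lemma diff_in_coords_iff:
  "diff_in_coords I J F \<longleftrightarrow> (\<forall>x y. \<exists>Dx Dy. has_coord_derivatives I J F x y Dx Dy)"
  unfolding diff_in_coords_def has_coord_derivatives_def ..

lemma has_coord_derivativesE:
  assumes "has_coord_derivatives I J F x y Dx Dy" and "e > 0"
  obtains \<delta> where "\<delta> > 0" and "\<And>h g. (\<forall>i. i \<notin> I \<longrightarrow> h i = 0) \<Longrightarrow> (\<forall>j. j \<notin> J \<longrightarrow> g j = 0) \<Longrightarrow>
        (\<Sum>i\<in>I. norm (h i)) + (\<Sum>j\<in>J. norm (g j)) < \<delta> \<Longrightarrow>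
        \<bar>F (\<lambda>i. x i + h i) (\<lambda>j. y j + g j) - F x y
           - (\<Sum>i\<in>I. Dx i (h i)) - (\<Sum>j\<in>J. Dy j (g j))\<bar>
          \<le> e * ((\<Sum>i\<in>I. norm (h i)) + (\<Sum>j\<in>J. norm (g j)))"
  using assms(1)[unfolded has_coord_derivatives_def, THEN conjunct2, THEN conjunct2,
      rule_format, OF assms(2)]
  by blast

lemma sum_norm_le_sum_onorm:
  assumes "\<forall>i\<in>I. bounded_linear (a i)"
  shows "(\<Sum>i\<in>I. norm (a i u)) \<le> (\<Sum>i\<in>I. onorm (a i)) * norm u"
  unfolding sum_distrib_right using assms by (intro sum_mono) (auto simp: onorm)

lemma has_coord_derivatives_compose_linear:
  fixes F :: "(nat \<Rightarrow> 'a::real_normed_vector) \<Rightarrow> (nat \<Rightarrow> 'a) \<Rightarrow> real"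
    and a b :: "nat \<Rightarrow> 'c::real_normed_vector \<Rightarrow> 'a"
  assumes F: "has_coord_derivatives I J F x y Dx Dy"
    and lin: "\<forall>i\<in>I. bounded_linear (a i)" "\<forall>j\<in>J. bounded_linear (b j)"
    and supp: "\<forall>i u. i \<notin> I \<longrightarrow> a i u = 0" "\<forall>j u. j \<notin> J \<longrightarrow> b j u = 0"
  shows "((\<lambda>u. F (\<lambda>i. x i + a i u) (\<lambda>j. y j + b j u)) has_derivative
           (\<lambda>u. (\<Sum>i\<in>I. Dx i (a i u)) + (\<Sum>j\<in>J. Dy j (b j u)))) (at 0)"
  unfolding has_derivative_at_alt
proof (intro conjI allI impI)
  have "\<forall>i\<in>I. bounded_linear (Dx i)" "\<forall>j\<in>J. bounded_linear (Dy j)"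
    using F unfolding has_coord_derivatives_def by auto
  with lin have "\<forall>i\<in>I. bounded_linear (\<lambda>u. Dx i (a i u))"
    and "\<forall>j\<in>J. bounded_linear (\<lambda>u. Dy j (b j u))"
    by (simp_all add: bounded_linear_compose)
  then show "bounded_linear (\<lambda>u. (\<Sum>i\<in>I. Dx i (a i u)) + (\<Sum>j\<in>J. Dy j (b j u)))"
    by (intro bounded_linear_add bounded_linear_sum) auto
  define C where "C = (\<Sum>i\<in>I. onorm (a i)) + (\<Sum>j\<in>J. onorm (b j))"
  define S where "S u = (\<Sum>i\<in>I. norm (a i u)) + (\<Sum>j\<in>J. norm (b j u))" for u
  have "0 \<le> C"
    using lin unfolding C_def by (auto intro!: add_nonneg_nonneg sum_nonneg onorm_pos_le)
  have S_le: "S u \<le> C * norm u" for u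
    unfolding S_def C_def distrib_right using lin by (intro add_mono sum_norm_le_sum_onorm)
  have a0: "a i 0 = 0" and b0: "b j 0 = 0" for i j
    using lin supp by (metis bounded_linear.linear linear_0)+
  fix e :: real assume "e > 0"
  moreover have "e / (C + 1) > 0"
    using \<open>0 \<le> C\<close> \<open>e > 0\<close> by simp
  ultimately obtain d where "d > 0" and d: "\<And>h g. (\<forall>i. i \<notin> I \<longrightarrow> h i = 0) \<Longrightarrow>
        (\<forall>j. j \<notin> J \<longrightarrow> g j = 0) \<Longrightarrow> (\<Sum>i\<in>I. norm (h i)) + (\<Sum>j\<in>J. norm (g j)) < d \<Longrightarrow>
        \<bar>F (\<lambda>i. x i + h i) (\<lambda>j. y j + g j) - F x y
           - (\<Sum>i\<in>I. Dx i (h i)) - (\<Sum>j\<in>J. Dy j (g j))\<bar>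
          \<le> e / (C + 1) * ((\<Sum>i\<in>I. norm (h i)) + (\<Sum>j\<in>J. norm (g j)))"
    using has_coord_derivativesE[OF F] by blast
  show "\<exists>d>0. \<forall>u. norm (u - 0) < d \<longrightarrow>
      norm (F (\<lambda>i. x i + a i u) (\<lambda>j. y j + b j u) - F (\<lambda>i. x i + a i 0) (\<lambda>j. y j + b j 0)
        - ((\<Sum>i\<in>I. Dx i (a i (u - 0))) + (\<Sum>j\<in>J. Dy j (b j (u - 0))))) \<le> e * norm (u - 0)"
  proof (intro exI[of _ "d / (C + 1)"] conjI allI impI)
    show "d / (C + 1) > 0" using \<open>d > 0\<close> \<open>0 \<le> C\<close> by simp
    fix u :: 'c assume "norm (u - 0) < d / (C + 1)"
    then have "(C + 1) * norm u < d" using \<open>0 \<le> C\<close> by (simp add: field_simps)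
    moreover have "S u \<le> (C + 1) * norm u" using S_le[of u] by (simp add: distrib_right add_increasing2)
    ultimately have "S u < d" by linarith
    then have "\<bar>F (\<lambda>i. x i + a i u) (\<lambda>j. y j + b j u) - F x y
           - (\<Sum>i\<in>I. Dx i (a i u)) - (\<Sum>j\<in>J. Dy j (b j u))\<bar> \<le> e / (C + 1) * S u"
      using d[of "\<lambda>i. a i u" "\<lambda>j. b j u"] supp unfolding S_def by simp
    also have "\<dots> \<le> e / (C + 1) * (C * norm u)"
      using \<open>e > 0\<close> \<open>0 \<le> C\<close> by (intro mult_left_mono S_le) simp
    also have "\<dots> \<le> e * norm u"
      using \<open>e > 0\<close> \<open>0 \<le> C\<close> by (simp add: field_simps mult_left_mono)
    finally show "norm (F (\<lambda>i. x i + a i u) (\<lambda>j. y j + b j u) - F (\<lambda>i. x i + a i 0) (\<lambda>j. y j + b j 0)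
        - ((\<Sum>i\<in>I. Dx i (a i (u - 0))) + (\<Sum>j\<in>J. Dy j (b j (u - 0))))) \<le> e * norm (u - 0)"
      by (simp add: a0 b0 algebra_simps)
  qed
qed

lemma has_coord_derivatives_swap:
  fixes F :: "(nat \<Rightarrow> 'a::real_normed_vector) \<Rightarrow> (nat \<Rightarrow> 'a) \<Rightarrow> real"
  assumes F: "has_coord_derivatives I J F x y Dx Dy"
  shows "has_coord_derivatives J I (\<lambda>v u. F u v) y x Dy Dx"
  unfolding has_coord_derivatives_def
proof (intro conjI allI impI)
  show "\<forall>j\<in>J. bounded_linear (Dy j)" "\<forall>i\<in>I. bounded_linear (Dx i)"
    using F unfolding has_coord_derivatives_def by auto
  fix e :: real assume "e > 0"
  obtain \<delta> where "\<delta> > 0" and \<delta>: "\<And>h g. (\<forall>i. i \<notin> I \<longrightarrow> h i = 0) \<Longrightarrow>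
        (\<forall>j. j \<notin> J \<longrightarrow> g j = 0) \<Longrightarrow> (\<Sum>i\<in>I. norm (h i)) + (\<Sum>j\<in>J. norm (g j)) < \<delta> \<Longrightarrow>
        \<bar>F (\<lambda>i. x i + h i) (\<lambda>j. y j + g j) - F x y
           - (\<Sum>i\<in>I. Dx i (h i)) - (\<Sum>j\<in>J. Dy j (g j))\<bar>
          \<le> e * ((\<Sum>i\<in>I. norm (h i)) + (\<Sum>j\<in>J. norm (g j)))"
    using has_coord_derivativesE[OF F \<open>e > 0\<close>] by blast
  show "\<exists>\<delta>>0. \<forall>(g :: nat \<Rightarrow> 'a) (h :: nat \<Rightarrow> 'a).
        (\<forall>j. j \<notin> J \<longrightarrow> g j = 0) \<longrightarrow> (\<forall>i. i \<notin> I \<longrightarrow> h i = 0) \<longrightarrow>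
        (\<Sum>j\<in>J. norm (g j)) + (\<Sum>i\<in>I. norm (h i)) < \<delta> \<longrightarrow>
        \<bar>F (\<lambda>i. x i + h i) (\<lambda>j. y j + g j) - F x y
           - (\<Sum>j\<in>J. Dy j (g j)) - (\<Sum>i\<in>I. Dx i (h i))\<bar>
          \<le> e * ((\<Sum>j\<in>J. norm (g j)) + (\<Sum>i\<in>I. norm (h i)))"
  proof (intro exI[of _ \<delta>] conjI allI impI)
    fix g h :: "nat \<Rightarrow> 'a"
    assume "\<forall>j. j \<notin> J \<longrightarrow> g j = 0" "\<forall>i. i \<notin> I \<longrightarrow> h i = 0"
      and "(\<Sum>j\<in>J. norm (g j)) + (\<Sum>i\<in>I. norm (h i)) < \<delta>"
    then show "\<bar>F (\<lambda>i. x i + h i) (\<lambda>j. y j + g j) - F x y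
           - (\<Sum>j\<in>J. Dy j (g j)) - (\<Sum>i\<in>I. Dx i (h i))\<bar>
          \<le> e * ((\<Sum>j\<in>J. norm (g j)) + (\<Sum>i\<in>I. norm (h i)))"
      using \<delta>[of h g] by (simp add: algebra_simps)
  qed (rule \<open>\<delta> > 0\<close>)
qed

lemma has_coord_derivatives_partial:
  assumes F: "has_coord_derivatives I J F x y Dx Dy" and "finite I" "k \<in> I"
  shows "((\<lambda>u. F (x(k := u)) y) has_derivative Dx k) (at (x k))"
proof -
  let ?a = "\<lambda>i u. if i = k then u else 0"
  have lin: "\<forall>i\<in>I. bounded_linear (Dx i)" "\<forall>j\<in>J. bounded_linear (Dy j)"
    using F unfolding has_coord_derivatives_def by auto
  have "(\<lambda>u. (\<Sum>i\<in>I. Dx i (?a i u)) + (\<Sum>j\<in>J. Dy j 0)) = Dx k"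
    using lin \<open>finite I\<close> \<open>k \<in> I\<close> by (auto simp: if_distrib linear_simps cong: if_cong)
  moreover have "((\<lambda>u. F (\<lambda>i. x i + ?a i u) (\<lambda>j. y j + 0)) has_derivative
      (\<lambda>u. (\<Sum>i\<in>I. Dx i (?a i u)) + (\<Sum>j\<in>J. Dy j 0))) (at 0)"
  proof (rule has_coord_derivatives_compose_linear[OF F])
    have "bounded_linear (?a i)" for i
      by (cases "i = k") (simp_all add: bounded_linear_zero)
    then show "\<forall>i\<in>I. bounded_linear (?a i)" ..
    show "\<forall>i u. i \<notin> I \<longrightarrow> ?a i u = 0"
      using \<open>k \<in> I\<close> by auto
  qed (simp_all add: bounded_linear_zero)
  ultimately have "((\<lambda>u. F (\<lambda>i. x i + ?a i u) y) has_derivative Dx k) (at (x k - x k))"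
    by simp
  then have "((\<lambda>u. F (\<lambda>i. x i + ?a i (u - x k)) y) has_derivative Dx k) (at (x k))"
    by (rule has_derivative_compose[of "\<lambda>u. u - x k" "\<lambda>h. h",
          OF has_derivative_diff[OF has_derivative_ident has_derivative_const, simplified]])
  moreover have "(\<lambda>i. x i + ?a i (u - x k)) = x(k := u)" for u
    by auto
  ultimately show ?thesis
    by simp
qed

definition partial_x ::
  "((nat \<Rightarrow> 'a::real_normed_vector) \<Rightarrow> (nat \<Rightarrow> 'a) \<Rightarrow> real) \<Rightarrow> (nat \<Rightarrow> 'a) \<Rightarrow> (nat \<Rightarrow> 'a) \<Rightarrow>
   nat \<Rightarrow> 'a \<Rightarrow> real" where
  "partial_x F x y k = frechet_derivative (\<lambda>u. F (x(k := u)) y) (at (x k))"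

definition partial_y ::
  "((nat \<Rightarrow> 'a::real_normed_vector) \<Rightarrow> (nat \<Rightarrow> 'a) \<Rightarrow> real) \<Rightarrow> (nat \<Rightarrow> 'a) \<Rightarrow> (nat \<Rightarrow> 'a) \<Rightarrow>
   nat \<Rightarrow> 'a \<Rightarrow> real" where
  "partial_y F x y k = frechet_derivative (\<lambda>u. F x (y(k := u))) (at (y k))"

lemma diff_in_coords_obtain_partials:
  fixes F :: "(nat \<Rightarrow> 'a::real_normed_vector) \<Rightarrow> (nat \<Rightarrow> 'a) \<Rightarrow> real"
  assumes "finite I" "finite J" "diff_in_coords I J F"
  obtains Dx Dy where "has_coord_derivatives I J F x y Dx Dy"
    and "\<forall>i\<in>I. partial_x F x y i = Dx i" and "\<forall>j\<in>J. partial_y F x y j = Dy j"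
proof -
  obtain Dx Dy where F: "has_coord_derivatives I J F x y Dx Dy"
    using assms(3) unfolding diff_in_coords_iff by blast
  moreover have "\<forall>i\<in>I. partial_x F x y i = Dx i"
    using has_coord_derivatives_partial[OF F \<open>finite I\<close>] frechet_derivative_at
    unfolding partial_x_def by metis
  moreover have "\<forall>j\<in>J. partial_y F x y j = Dy j"
    using has_coord_derivatives_partial[OF has_coord_derivatives_swap[OF F] \<open>finite J\<close>]
      frechet_derivative_at
    unfolding partial_y_def by metis
  ultimately show ?thesis by (rule that)
qed

lemma diff_in_coords_partials_zero:
  fixes F :: "(nat \<Rightarrow> 'a::real_normed_vector) \<Rightarrow> (nat \<Rightarrow> 'a) \<Rightarrow> real"
  assumes "finite I" "finite J" "diff_in_coords I J F"
  shows "i \<in> I \<Longrightarrow> partial_x F x y i 0 = 0" and "j \<in> J \<Longrightarrow> partial_y F x y j 0 = 0"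
proof -
  obtain Dx Dy where F: "has_coord_derivatives I J F x y Dx Dy"
    and X: "\<forall>i\<in>I. partial_x F x y i = Dx i" and Y: "\<forall>j\<in>J. partial_y F x y j = Dy j"
    by (rule diff_in_coords_obtain_partials[OF assms])
  have "\<forall>i\<in>I. bounded_linear (Dx i)" "\<forall>j\<in>J. bounded_linear (Dy j)"
    using F unfolding has_coord_derivatives_def by auto
  then show "i \<in> I \<Longrightarrow> partial_x F x y i 0 = 0" and "j \<in> J \<Longrightarrow> partial_y F x y j 0 = 0"
    using X Y by (simp_all add: bounded_linear.linear linear_0)
qed

lemma depends_only_has_real_derivative_line:
  fixes F :: "(nat \<Rightarrow> 'a::real_normed_vector) \<Rightarrow> (nat \<Rightarrow> 'a) \<Rightarrow> real"
  assumes dep: "depends_only I J F" and F: "has_coord_derivatives I J F x y Dx Dy"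
  shows "((\<lambda>t. F (\<lambda>i. x i + t *\<^sub>R \<eta> i) (\<lambda>j. y j + t *\<^sub>R \<zeta> j)) has_real_derivative
           (\<Sum>i\<in>I. Dx i (\<eta> i)) + (\<Sum>j\<in>J. Dy j (\<zeta> j))) (at 0)"
proof -
  define a where "a i t = (if i \<in> I then t *\<^sub>R \<eta> i else 0)" for i and t :: real
  define b where "b j t = (if j \<in> J then t *\<^sub>R \<zeta> j else 0)" for j and t :: real
  have "((\<lambda>t. F (\<lambda>i. x i + a i t) (\<lambda>j. y j + b j t)) has_derivative
      (\<lambda>t. (\<Sum>i\<in>I. Dx i (a i t)) + (\<Sum>j\<in>J. Dy j (b j t)))) (at 0)"
    by (rule has_coord_derivatives_compose_linear[OF F])
      (auto simp: a_def b_def bounded_linear_scaleR_left)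
  moreover have "F (\<lambda>i. x i + a i t) (\<lambda>j. y j + b j t) = F (\<lambda>i. x i + t *\<^sub>R \<eta> i) (\<lambda>j. y j + t *\<^sub>R \<zeta> j)"
    for t using dep unfolding depends_only_def a_def b_def by auto
  moreover have "(\<lambda>t. (\<Sum>i\<in>I. Dx i (a i t)) + (\<Sum>j\<in>J. Dy j (b j t)))
      = (*) ((\<Sum>i\<in>I. Dx i (\<eta> i)) + (\<Sum>j\<in>J. Dy j (\<zeta> j)))"
    by (rule ext) (use F in \<open>simp add: has_coord_derivatives_def a_def b_def
        bounded_linear.linear linear_scale sum_distrib_left[symmetric] algebra_simps\<close>)
  ultimately show ?thesis
    unfolding has_field_derivative_def by simp
qed

lemma diff_in_coords_has_real_derivative_line:
  fixes F :: "(nat \<Rightarrow> 'a::real_normed_vector) \<Rightarrow> (nat \<Rightarrow> 'a) \<Rightarrow> real"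
  assumes "finite I" "finite J" "depends_only I J F" "diff_in_coords I J F"
  shows "((\<lambda>t. F (\<lambda>i. x i + t *\<^sub>R \<eta> i) (\<lambda>j. y j + t *\<^sub>R \<zeta> j)) has_real_derivative
           (\<Sum>i\<in>I. partial_x F x y i (\<eta> i)) + (\<Sum>j\<in>J. partial_y F x y j (\<zeta> j))) (at 0)"
proof -
  obtain Dx Dy where F: "has_coord_derivatives I J F x y Dx Dy"
    and "\<forall>i\<in>I. partial_x F x y i = Dx i" and "\<forall>j\<in>J. partial_y F x y j = Dy j"
    by (rule diff_in_coords_obtain_partials[OF assms(1,2,4)])
  then show ?thesis
    using depends_only_has_real_derivative_line[OF assms(3) F] by simp
qed

lemma sum_bands_swap:
  fixes f g :: "nat \<Rightarrow> nat \<Rightarrow> 'a::comm_monoid_add"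
  assumes "\<forall>i<N. f i 0 = 0 \<and> g i N = 0" and "0 < N \<Longrightarrow> f (N - 1) N = 0 \<and> g 0 0 = 0"
  shows "(\<Sum>i<N. (\<Sum>j=0..i+1. f i j) + (\<Sum>j=i..N. g i j))
       = (\<Sum>k=1..N-1. (\<Sum>i=k-1..N-1. f i k) + (\<Sum>i=0..k. g i k))"
proof -
  have "(\<Sum>j=0..i+1. f i j) = (\<Sum>j\<in>{j\<in>{1..N-1}. j \<le> i+1}. f i j)" if "i < N" for i
  proof (rule sum.mono_neutral_right)
    show "\<forall>j\<in>{0..i+1} - {j\<in>{1..N-1}. j \<le> i+1}. f i j = 0"
    proof
      fix j assume "j \<in> {0..i+1} - {j\<in>{1..N-1}. j \<le> i+1}"
      then have "j = 0 \<or> (j = N \<and> i = N - 1)" using that by auto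
      then show "f i j = 0" using that assms by auto
    qed
  qed auto
  moreover have "(\<Sum>j=i..N. g i j) = (\<Sum>j\<in>{j\<in>{1..N-1}. i \<le> j}. g i j)" if "i < N" for i
  proof (rule sum.mono_neutral_right)
    show "\<forall>j\<in>{i..N} - {j\<in>{1..N-1}. i \<le> j}. g i j = 0"
    proof
      fix j assume "j \<in> {i..N} - {j\<in>{1..N-1}. i \<le> j}"
      then have "j = N \<or> (j = 0 \<and> i = 0)" using that by auto
      then show "g i j = 0" using that assms by auto
    qed
  qed auto
  ultimately have "(\<Sum>i<N. (\<Sum>j=0..i+1. f i j) + (\<Sum>j=i..N. g i j))
      = (\<Sum>i<N. \<Sum>j\<in>{j\<in>{1..N-1}. j \<le> i+1}. f i j) + (\<Sum>i<N. \<Sum>j\<in>{j\<in>{1..N-1}. i \<le> j}. g i j)"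
    by (simp add: sum.distrib)
  also have "\<dots> = (\<Sum>k=1..N-1. \<Sum>i\<in>{i\<in>{..<N}. k \<le> i+1}. f i k)
                 + (\<Sum>k=1..N-1. \<Sum>i\<in>{i\<in>{..<N}. i \<le> k}. g i k)"
    by (simp only: sum.swap_restrict[of "{..<N}" "{1..N-1}"] finite_lessThan finite_atLeastAtMost)
  also have "\<dots> = (\<Sum>k=1..N-1. (\<Sum>i=k-1..N-1. f i k) + (\<Sum>i=0..k. g i k))"
  proof -
    have "{i\<in>{..<N}. k \<le> i+1} = {k-1..N-1}" and "{i\<in>{..<N}. i \<le> k} = {0..k}"
      if "k \<in> {1..N-1}" for k
      using that by auto
    then show ?thesis by (simp add: sum.distrib)
  qed
  finally show ?thesis .
qed

lemma stationary_iff_coefficients_vanish: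
  fixes E :: "nat \<Rightarrow> 'a::zero \<Rightarrow> real" and \<Phi> :: "(nat \<Rightarrow> 'a) \<Rightarrow> real \<Rightarrow> real"
  assumes "finite K" and E0: "\<And>k. k \<in> K \<Longrightarrow> E k 0 = 0"
    and deriv: "\<And>\<eta>. P \<eta> \<Longrightarrow> (\<Phi> \<eta> has_real_derivative (\<Sum>k\<in>K. E k (\<eta> k))) (at 0)"
    and P_delta: "\<And>k v. k \<in> K \<Longrightarrow> P (\<lambda>j. if j = k then v else 0)"
  shows "(\<forall>\<eta>. P \<eta> \<longrightarrow> (\<Phi> \<eta> has_real_derivative 0) (at 0)) \<longleftrightarrow> (\<forall>k\<in>K. E k = (\<lambda>v. 0))"
proof
  assume stationary: "\<forall>\<eta>. P \<eta> \<longrightarrow> (\<Phi> \<eta> has_real_derivative 0) (at 0)"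
  show "\<forall>k\<in>K. E k = (\<lambda>v. 0)"
  proof (intro ballI ext)
    fix k v assume "k \<in> K"
    define \<eta> :: "nat \<Rightarrow> 'a" where "\<eta> j = (if j = k then v else 0)" for j
    have "P \<eta>"
      unfolding \<eta>_def using P_delta \<open>k \<in> K\<close> .
    have "(\<Sum>j\<in>K. E j (\<eta> j)) = (\<Sum>j\<in>K. if j = k then E k v else 0)"
      by (rule sum.cong) (auto simp: \<eta>_def E0)
    also have "\<dots> = E k v"
      using \<open>finite K\<close> \<open>k \<in> K\<close> by simp
    finally have "(\<Phi> \<eta> has_real_derivative E k v) (at 0)"
      using deriv[OF \<open>P \<eta>\<close>] by simp
    then show "E k v = 0"
      using stationary \<open>P \<eta>\<close> DERIV_unique by blast
  qed
next
  assume "\<forall>k\<in>K. E k = (\<lambda>v. 0)"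
  then show "\<forall>\<eta>. P \<eta> \<longrightarrow> (\<Phi> \<eta> has_real_derivative 0) (at 0)"
    using deriv by simp
qed

definition discrete_euler_lagrange ::
  "nat \<Rightarrow> (nat \<Rightarrow> (nat \<Rightarrow> 'a::real_normed_vector) \<Rightarrow> (nat \<Rightarrow> 'a) \<Rightarrow> real) \<Rightarrow>
   (nat \<Rightarrow> 'a) \<Rightarrow> (nat \<Rightarrow> 'a) \<Rightarrow> nat \<Rightarrow> 'a \<Rightarrow> real" where
  "discrete_euler_lagrange N L x y k =
     (\<lambda>v. (\<Sum>i=k-1..N-1. partial_x (L i) x y k v) + (\<Sum>i=0..k. partial_y (L i) x y k v))"

lemma band_partials_zero:
  fixes L :: "nat \<Rightarrow> (nat \<Rightarrow> 'a::real_normed_vector) \<Rightarrow> (nat \<Rightarrow> 'a) \<Rightarrow> real"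
  assumes diff: "\<forall>k<N. diff_in_coords {0..k+1} {k..N} (L k)" and "i < N"
  shows "k \<le> i + 1 \<Longrightarrow> partial_x (L i) x y k 0 = 0"
    and "i \<le> k \<Longrightarrow> k \<le> N \<Longrightarrow> partial_y (L i) x y k 0 = 0"
  using diff_in_coords_partials_zero[of "{0..i+1}" "{i..N}" "L i"] diff \<open>i < N\<close> by auto

lemma discrete_euler_lagrange_zero:
  fixes L :: "nat \<Rightarrow> (nat \<Rightarrow> 'a::real_normed_vector) \<Rightarrow> (nat \<Rightarrow> 'a) \<Rightarrow> real"
  assumes "\<forall>k<N. diff_in_coords {0..k+1} {k..N} (L k)" and "k \<in> {1..N-1}"
  shows "discrete_euler_lagrange N L x y k 0 = 0"
  using assms unfolding discrete_euler_lagrange_def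
  by (auto simp: band_partials_zero intro!: sum.neutral)

lemma discrete_action_variation:
  fixes L :: "nat \<Rightarrow> (nat \<Rightarrow> 'a::real_normed_vector) \<Rightarrow> (nat \<Rightarrow> 'a) \<Rightarrow> real"
  assumes dep: "\<forall>k<N. depends_only {0..k+1} {k..N} (L k)"
    and diff: "\<forall>k<N. diff_in_coords {0..k+1} {k..N} (L k)"
    and "\<eta> 0 = 0" "\<eta> N = 0"
  shows "((\<lambda>\<epsilon>. discrete_action N L (\<lambda>i. x i + \<epsilon> *\<^sub>R \<eta> i) (\<lambda>i. y i + \<epsilon> *\<^sub>R \<eta> i))
           has_real_derivative (\<Sum>k=1..N-1. discrete_euler_lagrange N L x y k (\<eta> k))) (at 0)"
proof -
  have "((\<lambda>\<epsilon>. discrete_action N L (\<lambda>i. x i + \<epsilon> *\<^sub>R \<eta> i) (\<lambda>i. y i + \<epsilon> *\<^sub>R \<eta> i))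
      has_real_derivative (\<Sum>i<N. (\<Sum>j=0..i+1. partial_x (L i) x y j (\<eta> j))
                                + (\<Sum>j=i..N. partial_y (L i) x y j (\<eta> j)))) (at 0)"
    unfolding discrete_action_def
  proof (rule DERIV_sum)
    fix i assume "i \<in> {..<N}"
    then show "((\<lambda>\<epsilon>. L i (\<lambda>j. x j + \<epsilon> *\<^sub>R \<eta> j) (\<lambda>j. y j + \<epsilon> *\<^sub>R \<eta> j)) has_real_derivative
        (\<Sum>j=0..i+1. partial_x (L i) x y j (\<eta> j)) + (\<Sum>j=i..N. partial_y (L i) x y j (\<eta> j))) (at 0)"
      using dep diff by (intro diff_in_coords_has_real_derivative_line) auto
  qed
  also have "(\<Sum>i<N. (\<Sum>j=0..i+1. partial_x (L i) x y j (\<eta> j)) + (\<Sum>j=i..N. partial_y (L i) x y j (\<eta> j)))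
      = (\<Sum>k=1..N-1. discrete_euler_lagrange N L x y k (\<eta> k))"
    unfolding discrete_euler_lagrange_def
    by (rule sum_bands_swap) (simp_all add: assms(3,4) band_partials_zero[OF diff])
  finally show ?thesis .
qed

theorem proposition4p5:
  fixes N :: nat
    and L :: "nat \<Rightarrow> (nat \<Rightarrow> real^'d) \<Rightarrow> (nat \<Rightarrow> real^'d) \<Rightarrow> real"
    and xa xb ya yb :: "real^'d"
    and x y :: "nat \<Rightarrow> real^'d"
  assumes dep: "\<forall>k<N. depends_only {0..k+1} {k..N} (L k)"
    and diff: "\<forall>k<N. diff_in_coords {0..k+1} {k..N} (L k)"
    and bc: "x 0 = xa" "x N = xb" "y 0 = ya" "y N = yb"
  shows "(\<forall>\<eta> :: nat \<Rightarrow> real^'d. \<eta> 0 = 0 \<longrightarrow> \<eta> N = 0 \<longrightarrow>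
            ((\<lambda>\<epsilon>. discrete_action N L (\<lambda>i. x i + \<epsilon> *\<^sub>R \<eta> i) (\<lambda>i. y i + \<epsilon> *\<^sub>R \<eta> i))
               has_real_derivative 0) (at 0))
         \<longleftrightarrow>
         (\<forall>k\<in>{1..N-1}.
            (\<lambda>v. (\<Sum>i=k-1..N-1. frechet_derivative (\<lambda>u. L i (x(k := u)) y) (at (x k)) v)
                + (\<Sum>i=0..k. frechet_derivative (\<lambda>u. L i x (y(k := u))) (at (y k)) v))
            = (\<lambda>v. 0))"
proof -
  have "(\<forall>\<eta> :: nat \<Rightarrow> real^'d. \<eta> 0 = 0 \<and> \<eta> N = 0 \<longrightarrow>
            ((\<lambda>\<epsilon>. discrete_action N L (\<lambda>i. x i + \<epsilon> *\<^sub>R \<eta> i) (\<lambda>i. y i + \<epsilon> *\<^sub>R \<eta> i))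
               has_real_derivative 0) (at 0))
      \<longleftrightarrow> (\<forall>k\<in>{1..N-1}. discrete_euler_lagrange N L x y k = (\<lambda>v. 0))"
  proof (rule stationary_iff_coefficients_vanish)
    fix \<eta> :: "nat \<Rightarrow> real^'d" assume "\<eta> 0 = 0 \<and> \<eta> N = 0"
    then show "((\<lambda>\<epsilon>. discrete_action N L (\<lambda>i. x i + \<epsilon> *\<^sub>R \<eta> i) (\<lambda>i. y i + \<epsilon> *\<^sub>R \<eta> i))
        has_real_derivative (\<Sum>k=1..N-1. discrete_euler_lagrange N L x y k (\<eta> k))) (at 0)"
      using discrete_action_variation[OF dep diff] by blast
  qed (auto simp: discrete_euler_lagrange_zero[OF diff])
  then show ?thesis
    unfolding imp_conjL discrete_euler_lagrange_def partial_x_def partial_y_def .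
qed

end
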